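(* Let $\mathcal{N}=\{1,\dots,N\}$ be a finite index set of blocks, let $\sigma>0$, and let $\mu_1,\dots,\mu_N\in\mathbb{R}$. For a fixed user $i$, let $p_{i,1},\dots,p_{i,N}>0$ be prior probabilities with $\sum_{n\in\mathcal{N}}p_{i,n}=1$. For $n\in\mathcal{N}$ let $\mathbb{P}(s\mid n)=\frac{1}{\sqrt{2\pi\sigma^2}}e^{-(s-\mu_n)^2/(2\sigma^2)}$ be the Gaussian density with mean $\mu_n$ and standard deviation $\sigma$. For $n'\in\mathcal{N}$ define the decision region $$\mathcal{R}_{i,n'}=\Big\{s\in\mathbb{R} : (s-\mu_{n'})^2-(s-\mu_n)^2\le 2\sigma^2\ln\frac{p_{i,n'}}{p_{i,n}}\ \text{ for all } n\in\mathcal{N}\setminus\{n'\}\Big\}.$$ Let $n,n'\in\mathcal{N}$ with $n\neq n'$ and $\mu_n\neq\mu_{n'}$, and set $$d_{i,n,n'}=\frac{(\mu_{n'}-\mu_n)^2-2\sigma^2\ln(p_{i,n'}/p_{i,n})}{2\sigma|\mu_{n'}-\mu_n|}.$$ Then $$\int_{\mathcal{R}_{i,n'}}\mathbb{P}(s\mid n)\,ds\le\begin{cases}\frac{1}{2}e^{-d_{i,n,n'}^2/2}, & d_{i,n,n'}\ge 0,\\[4pt] 1-\frac{1}{4}e^{-2d_{i,n,n'}^2/\pi}, & d_{i,n,n'}<0.\end{cases}$$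
   Context: This arises in received-signal-strength (RSS) based positioning: the space is divided into blocks $n$, the RSS measured by a user located in block $n$ is Gaussian with mean $\mu_n$ and standard deviation $\sigma$, $p_{i,n}$ is the prior probability that user $i$ is in block $n$, and $\mathcal{R}_{i,n'}$ is the set of RSS values for which the (prior-weighted maximum likelihood) estimate of user $i$'s location is block $n'$. The integral is thus the probability that a user in block $n$ is wrongly located in block $n'$. *)

theory Defs
  imports "HOL-Probability.Probability"
begin

definition decision_region ::
  "nat \<Rightarrow> real \<Rightarrow> (nat \<Rightarrow> real) \<Rightarrow> (nat \<Rightarrow> real) \<Rightarrow> nat \<Rightarrow> real set" where
  "decision_region N \<sigma> \<mu> p n' =
     {s. \<forall>n\<in>{1..N} - {n'}. (s - \<mu> n')\<^sup>2 - (s - \<mu> n)\<^sup>2 \<le> 2 * \<sigma>\<^sup>2 * ln (p n' / p n)}"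

definition dist_param ::
  "real \<Rightarrow> (nat \<Rightarrow> real) \<Rightarrow> (nat \<Rightarrow> real) \<Rightarrow> nat \<Rightarrow> nat \<Rightarrow> real" where
  "dist_param \<sigma> \<mu> p n n' =
     ((\<mu> n' - \<mu> n)\<^sup>2 - 2 * \<sigma>\<^sup>2 * ln (p n' / p n)) / (2 * \<sigma> * \<bar>\<mu> n' - \<mu> n\<bar>)"

end

(* The decision region for n' lies inside the half-plane where n' beats n alone, which is the
   half-line {s. d <= (s - mu_n) / c} with c = sigma * sgn (mu_n' - mu_n); the substitution
   s = mu_n + c t turns its Gaussian mass into the standard normal tail Q(d) = int_d^oo phi.
   For d >= 0, phi(t) <= exp(-d^2/2) phi(t - d) on [d, oo) gives Q(d) <= exp(-d^2/2) / 2.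
   For d < 0, Q(d) = 1 - Q(-d), and Q(x) >= exp(-2 x^2/pi) / 4 for x >= 0 follows by integrating
   the minorant phi(t) >= (t/pi) exp(-2 t^2/pi), which has an explicit antiderivative. *)

theory Submission
  imports Defs "HOL-Real_Asymp.Real_Asymp"
begin

definition std_normal_tail :: "real \<Rightarrow> real" where
  "std_normal_tail x = (LBINT t:{x..}. std_normal_density t)"

lemma set_integrable_normal_density:
  "0 < \<sigma> \<Longrightarrow> A \<in> sets borel \<Longrightarrow> set_integrable lborel A (normal_density \<mu> \<sigma>)"
  unfolding set_integrable_def by (rule integrable_mult_indicator) simp_all

lemma set_integral_mono_set_nonneg:
  fixes f :: "_ \<Rightarrow> real"
  assumes "set_integrable M B f" and "A \<subseteq> B" and "\<And>x. x \<in> B \<Longrightarrow> 0 \<le> f x"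
  shows "(LINT x:A|M. f x) \<le> (LINT x:B|M. f x)"
proof (cases "set_integrable M A f")
  case True
  then show ?thesis
    using assms unfolding set_integrable_def set_lebesgue_integral_def
    by (intro integral_mono) (auto split: split_indicator)
next
  case False
  then have "(LINT x:A|M. f x) = 0"
    unfolding set_integrable_def set_lebesgue_integral_def by (rule not_integrable_integral_eq)
  moreover have "0 \<le> (LINT x:B|M. f x)"
    using assms(3) unfolding set_lebesgue_integral_def
    by (intro Bochner_Integration.integral_nonneg) (auto split: split_indicator)
  ultimately show ?thesis by simp
qed

lemma set_integral_normal_density_halfline:
  fixes a c x :: real
  assumes "c \<noteq> 0"
  shows "(LBINT s:{s. x \<le> (s - a) / c}. normal_density a c s) = std_normal_tail x"
proof -
  have ind: "indicator {s. x \<le> (s - a) / c} (a + c * y) = (indicator {x..} y :: real)" for y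
    using assms by (simp add: indicator_def)
  have dens: "normal_density a c (a + c * y) = std_normal_density y / \<bar>c\<bar>" for y
    using assms by (simp add: normal_density_def real_sqrt_mult power_mult_distrib)
  have "(LBINT s:{s. x \<le> (s - a) / c}. normal_density a c s)
      = \<bar>c\<bar> * (LBINT y. indicator {x..} y * (std_normal_density y / \<bar>c\<bar>))"
    unfolding set_lebesgue_integral_def
    by (subst lborel_integral_real_affine[OF assms, where t = a]) (simp add: ind dens)
  also have "\<dots> = std_normal_tail x"
    using assms by (simp add: std_normal_tail_def set_lebesgue_integral_def)
  finally show ?thesis .
qed

lemma std_normal_tail_uminus: "std_normal_tail (- x) = 1 - std_normal_tail x"
proof -
  have "1 = (LBINT t:{x..} \<union> {..<x}. std_normal_density t)"
    by (simp add: set_lebesgue_integral_def flip: Compl_atLeast)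
  also have "\<dots> = std_normal_tail x + (LBINT t:{..<x}. std_normal_density t)"
    unfolding std_normal_tail_def
    by (intro set_integral_Un set_integrable_normal_density) auto
  also have "(LBINT t:{..<x}. std_normal_density t) = (LBINT t:{-x<..}. std_normal_density t)"
  proof -
    have "{t. - t \<in> {..<x}} = {-x<..}" by auto
    then show ?thesis
      by (simp add: set_integral_reflect[of "{..<x}"] std_normal_density_def)
  qed
  also have "\<dots> = std_normal_tail (- x)"
    unfolding std_normal_tail_def
    by (rule set_integral_cong_set)
       (auto simp: set_borel_measurable_def intro: eventually_mono[OF AE_lborel_singleton[of "- x"]])
  finally show ?thesis by simp
qed

lemma std_normal_tail_le:
  assumes "0 \<le> d"
  shows "std_normal_tail d \<le> 1/2 * exp (- d\<^sup>2 / 2)"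
proof -
  have halfline: "{s. 0 \<le> (s - d) / 1} = {d..}" by auto
  have shifted: "(LBINT t:{d..}. normal_density d 1 t) = 1/2"
    using set_integral_normal_density_halfline[of 1 0 d] std_normal_tail_uminus[of 0]
    unfolding halfline by simp
  have "std_normal_tail d \<le> (LBINT t:{d..}. exp (- d\<^sup>2 / 2) * normal_density d 1 t)"
    unfolding std_normal_tail_def
  proof (rule set_integral_mono)
    fix t assume "t \<in> {d..}"
    then have "- t\<^sup>2 / 2 \<le> - d\<^sup>2 / 2 + - (t - d)\<^sup>2 / 2"
      using mult_nonneg_nonneg[OF assms, of "t - d"] by (simp add: power2_eq_square algebra_simps)
    then show "std_normal_density t \<le> exp (- d\<^sup>2 / 2) * normal_density d 1 t"
      by (simp add: normal_density_def exp_add[symmetric] divide_right_mono)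
  qed (auto intro: set_integrable_normal_density)
  also have "\<dots> = 1/2 * exp (- d\<^sup>2 / 2)"
    using shifted by simp
  finally show ?thesis .
qed

lemma has_bochner_integral_atLeast_gaussian_first_moment:
  fixes a x :: real
  assumes "0 < a" and "0 \<le> x"
  shows "has_bochner_integral lborel (\<lambda>t. indicator {x..} t * (t * exp (- a * t\<^sup>2)))
           (exp (- a * x\<^sup>2) / (2 * a))"
proof (rule has_bochner_integral_nn_integral)
  define F where "F = (\<lambda>t. - exp (- a * t\<^sup>2) / (2 * a))"
  have lim: "(F \<longlongrightarrow> 0) at_top"
    unfolding F_def using assms(1) by real_asymp
  have "(\<integral>\<^sup>+t. ennreal (t * exp (- a * t\<^sup>2)) * indicator {x..} t \<partial>lborel) = 0 - F x"
    using assms by (intro nn_integral_FTC_atLeast[OF _ _ _ lim])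
       (auto intro!: derivative_eq_intros simp: F_def field_simps power2_eq_square)
  moreover have "(\<integral>\<^sup>+t. ennreal (indicator {x..} t * (t * exp (- a * t\<^sup>2))) \<partial>lborel)
      = (\<integral>\<^sup>+t. ennreal (t * exp (- a * t\<^sup>2)) * indicator {x..} t \<partial>lborel)"
    by (intro nn_integral_cong) (simp split: split_indicator)
  ultimately show "(\<integral>\<^sup>+t. ennreal (indicator {x..} t * (t * exp (- a * t\<^sup>2))) \<partial>lborel)
      = ennreal (exp (- a * x\<^sup>2) / (2 * a))"
    by (simp add: F_def)
qed (use assms in \<open>auto split: split_indicator\<close>)

lemma std_normal_density_ge:
  fixes t :: real
  assumes "0 \<le> t"
  shows "t / pi * exp (- 2 * t\<^sup>2 / pi) \<le> std_normal_density t"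
proof -
  \<comment> \<open>\<open>exp (c t\<^sup>2) exp (-2 t\<^sup>2 / pi) = exp (- t\<^sup>2 / 2)\<close>, and \<open>e y \<le> exp y\<close> at \<open>y = 2 c t\<^sup>2\<close>
     reduces the claim to \<open>e (4 - pi) \<ge> 2\<close>\<close>
  define c where "c = 2 / pi - 1 / 2"
  have exp_ge: "exp 1 * y \<le> exp y" for y :: real
    using exp_ge_add_one_self[of "y - 1"] by (simp add: exp_diff field_simps)
  have "2 \<le> exp 1 * (4 - pi)"
  proof -
    have "5 / 2 \<le> exp (1 :: real)" using exp_lower_Taylor_quadratic[of 1] by simp
    moreover have "4 / 5 \<le> 4 - pi" using pi_approx by simp
    ultimately have "5 / 2 * (4 / 5) \<le> exp 1 * (4 - pi)" by (intro mult_mono) auto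
    then show ?thesis by simp
  qed
  then have "2 / pi \<le> exp 1 * (2 * c)"
    unfolding c_def using pi_gt3 by (simp add: field_simps)
  then have "2 / pi * t\<^sup>2 \<le> exp 1 * (2 * c * t\<^sup>2)"
    using mult_right_mono[of "2 / pi" "exp 1 * (2 * c)" "t\<^sup>2"] by (simp add: mult.assoc)
  also have "\<dots> \<le> exp (2 * (c * t\<^sup>2))"
    using exp_ge[of "2 * c * t\<^sup>2"] by (simp add: mult.assoc)
  also have "\<dots> = (exp (c * t\<^sup>2))\<^sup>2"
    by (rule exp_double)
  finally have "(t * sqrt (2 / pi))\<^sup>2 \<le> (exp (c * t\<^sup>2))\<^sup>2"
    by (simp add: power_mult_distrib mult.commute)
  then have root: "t * sqrt (2 / pi) \<le> exp (c * t\<^sup>2)"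
    by (rule power2_le_imp_le) simp
  have "t / pi * exp (- 2 * t\<^sup>2 / pi) = t * sqrt (2 / pi) * exp (- 2 * t\<^sup>2 / pi) / sqrt (2 * pi)"
    by (simp add: real_sqrt_divide real_sqrt_mult field_simps)
  also have "\<dots> \<le> exp (c * t\<^sup>2) * exp (- 2 * t\<^sup>2 / pi) / sqrt (2 * pi)"
    using root by (intro divide_right_mono mult_right_mono) auto
  also have "\<dots> = std_normal_density t"
    by (simp add: std_normal_density_def c_def field_simps flip: exp_add)
  finally show ?thesis .
qed

lemma std_normal_tail_ge:
  assumes "0 \<le> x"
  shows "1/4 * exp (- 2 * x\<^sup>2 / pi) \<le> std_normal_tail x"
proof -
  have "has_bochner_integral lborel (\<lambda>t. 1 / pi * (indicator {x..} t * (t * exp (- (2 / pi) * t\<^sup>2))))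
          (1 / pi * (exp (- (2 / pi) * x\<^sup>2) / (2 * (2 / pi))))"
    using assms by (intro has_bochner_integral_mult_right has_bochner_integral_atLeast_gaussian_first_moment) auto
  then have kernel: "has_bochner_integral lborel (\<lambda>t. indicator {x..} t * (t / pi * exp (- 2 * t\<^sup>2 / pi)))
          (1/4 * exp (- 2 * x\<^sup>2 / pi))"
    by (simp add: field_simps)
  have "1/4 * exp (- 2 * x\<^sup>2 / pi) = (LBINT t:{x..}. t / pi * exp (- 2 * t\<^sup>2 / pi))"
    using kernel by (simp add: set_lebesgue_integral_def has_bochner_integral_iff)
  also have "\<dots> \<le> std_normal_tail x"
    unfolding std_normal_tail_def
  proof (rule set_integral_mono)
    show "set_integrable lborel {x..} (\<lambda>t. t / pi * exp (- 2 * t\<^sup>2 / pi))"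
      using kernel by (simp add: set_integrable_def has_bochner_integral_iff)
    show "t / pi * exp (- 2 * t\<^sup>2 / pi) \<le> std_normal_density t" if "t \<in> {x..}" for t
      using assms that by (intro std_normal_density_ge) simp
  qed (auto intro: set_integrable_normal_density)
  finally show ?thesis .
qed

lemma pairwise_region_iff_halfline:
  fixes a b s \<sigma> L :: real
  assumes "0 < \<sigma>" and "a \<noteq> b"
  shows "(s - b)\<^sup>2 - (s - a)\<^sup>2 \<le> 2 * \<sigma>\<^sup>2 * L \<longleftrightarrow>
         ((b - a)\<^sup>2 - 2 * \<sigma>\<^sup>2 * L) / (2 * \<sigma> * \<bar>b - a\<bar>) \<le> (s - a) / (\<sigma> * sgn (b - a))"
proof -
  have "(s - a) / (\<sigma> * sgn (b - a)) = 2 * (b - a) * (s - a) / (2 * \<sigma> * \<bar>b - a\<bar>)"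
    using assms by (auto simp: sgn_if field_simps)
  moreover have "(s - b)\<^sup>2 - (s - a)\<^sup>2 = (b - a)\<^sup>2 - 2 * (b - a) * (s - a)"
    by (simp add: power2_eq_square algebra_simps)
  ultimately show ?thesis
    using assms by (auto simp: divide_le_cancel mult_less_0_iff)
qed

lemma decision_region_subset_halfline:
  assumes "0 < \<sigma>" and "n \<in> {1..N}" and "n \<noteq> n'" and "\<mu> n \<noteq> \<mu> n'"
  shows "decision_region N \<sigma> \<mu> p n'
           \<subseteq> {s. dist_param \<sigma> \<mu> p n n' \<le> (s - \<mu> n) / (\<sigma> * sgn (\<mu> n' - \<mu> n))}"
proof
  fix s assume "s \<in> decision_region N \<sigma> \<mu> p n'"
  then have "(s - \<mu> n')\<^sup>2 - (s - \<mu> n)\<^sup>2 \<le> 2 * \<sigma>\<^sup>2 * ln (p n' / p n)"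
    using assms(2,3) by (auto simp: decision_region_def)
  then show "s \<in> {s. dist_param \<sigma> \<mu> p n n' \<le> (s - \<mu> n) / (\<sigma> * sgn (\<mu> n' - \<mu> n))}"
    using pairwise_region_iff_halfline[OF assms(1,4)] by (simp add: dist_param_def)
qed

theorem proposition1:
  fixes N :: nat and \<sigma> :: real and \<mu> p :: "nat \<Rightarrow> real" and n n' :: nat
  assumes "\<sigma> > 0"
    and "\<And>k. k \<in> {1..N} \<Longrightarrow> p k > 0"
    and "(\<Sum>k\<in>{1..N}. p k) = 1"
    and "n \<in> {1..N}" and "n' \<in> {1..N}" and "n \<noteq> n'" and "\<mu> n \<noteq> \<mu> n'"
  shows "(LINT s:decision_region N \<sigma> \<mu> p n'|lborel. normal_density (\<mu> n) \<sigma> s)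
         \<le> (if dist_param \<sigma> \<mu> p n n' \<ge> 0
             then 1/2 * exp (- (dist_param \<sigma> \<mu> p n n')\<^sup>2 / 2)
             else 1 - 1/4 * exp (- 2 * (dist_param \<sigma> \<mu> p n n')\<^sup>2 / pi))"
proof -
  define d where "d = dist_param \<sigma> \<mu> p n n'"
  define c where "c = \<sigma> * sgn (\<mu> n' - \<mu> n)"
  have "c \<noteq> 0" and "c\<^sup>2 = \<sigma>\<^sup>2"
    using assms(1,7) by (auto simp: c_def power_mult_distrib sgn_if)
  then have density: "normal_density (\<mu> n) \<sigma> = normal_density (\<mu> n) c"
    by (simp add: normal_density_def fun_eq_iff)
  have "(LINT s:decision_region N \<sigma> \<mu> p n'|lborel. normal_density (\<mu> n) \<sigma> s)
      \<le> (LBINT s:{s. d \<le> (s - \<mu> n) / c}. normal_density (\<mu> n) \<sigma> s)"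
    using assms(1) decision_region_subset_halfline[OF assms(1,4,6,7)] unfolding d_def c_def
    by (intro set_integral_mono_set_nonneg set_integrable_normal_density) auto
  also have "\<dots> = std_normal_tail d"
    unfolding density by (rule set_integral_normal_density_halfline[OF \<open>c \<noteq> 0\<close>])
  finally have "(LINT s:decision_region N \<sigma> \<mu> p n'|lborel. normal_density (\<mu> n) \<sigma> s)
      \<le> std_normal_tail d" .
  moreover have "std_normal_tail d \<le> 1 - 1/4 * exp (- 2 * d\<^sup>2 / pi)" if "d < 0"
    using std_normal_tail_ge[of "- d"] std_normal_tail_uminus[of d] that by simp
  ultimately show ?thesis
    using std_normal_tail_le[of d] unfolding d_def[symmetric] by auto
qed

end
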